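(* For all $x,y\ge 1$ with $x\ne y$ and all $n\ge\max(x,y)$, the $(x,y)$ edge-removal process on $n$ vertices does not necessarily result in an $(x,y)$ task-dependency graph; that is, with positive probability its result is not an $(x,y)$ task-dependency graph.
   Context: A task-dependency graph is a finite directed acyclic graph (no loops, no multiple edges). A vertex is initial if it has in-degree $0$ and terminal if it has out-degree $0$ (an isolated vertex is both). An $(x,y)$ task-dependency graph has exactly $x$ initial and exactly $y$ terminal vertices. The $(x,y)$ edge-removal process on $n$ vertices: start with the task-dependency graph on $\{1,\dots,n\}$ having all edges $(a,b)$ with $a<b$. Edges are removed uniformly at random, one at a time; a removal that would cause more than $x$ initial vertices or more than $y$ terminal vertices is cancelled. The process terminates when no further edge can be removed. *)

theory Defs
  imports "HOL-Probability.Probability"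
begin

definition complete_edges :: "nat \<Rightarrow> (nat \<times> nat) set" where
  "complete_edges n = {(a, b). a \<in> {1..n} \<and> b \<in> {1..n} \<and> a < b}"

definition initial_vs :: "nat \<Rightarrow> (nat \<times> nat) set \<Rightarrow> nat set" where
  "initial_vs n E = {v \<in> {1..n}. \<not> (\<exists>u. (u, v) \<in> E)}"

definition terminal_vs :: "nat \<Rightarrow> (nat \<times> nat) set \<Rightarrow> nat set" where
  "terminal_vs n E = {v \<in> {1..n}. \<not> (\<exists>w. (v, w) \<in> E)}"

text \<open>An (x,y) task-dependency graph on {1..n} whose edges go from smaller to larger
  vertices (hence it is automatically acyclic, without loops or multiple edges).\<close>
definition is_xy_tdg :: "nat \<Rightarrow> nat \<Rightarrow> nat \<Rightarrow> (nat \<times> nat) set \<Rightarrow> bool" where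
  "is_xy_tdg x y n E \<longleftrightarrow> E \<subseteq> complete_edges n \<and>
     card (initial_vs n E) = x \<and> card (terminal_vs n E) = y"

definition removable_edges :: "nat \<Rightarrow> nat \<Rightarrow> nat \<Rightarrow> (nat \<times> nat) set \<Rightarrow> (nat \<times> nat) set" where
  "removable_edges x y n E = {e \<in> E. card (initial_vs n (E - {e})) \<le> x \<and>
                                       card (terminal_vs n (E - {e})) \<le> y}"

text \<open>Choosing a uniformly random remaining edge and
  cancelling invalid removals makes the next effective removal uniform among the
  removable edges, which is what is modelled here.\<close>
fun erp_steps :: "nat \<Rightarrow> nat \<Rightarrow> nat \<Rightarrow> nat \<Rightarrow> (nat \<times> nat) set \<Rightarrow> (nat \<times> nat) set pmf" where
  "erp_steps x y n 0 E = return_pmf E"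
| "erp_steps x y n (Suc k) E =
     (if removable_edges x y n E = {} then return_pmf E
      else pmf_of_set (removable_edges x y n E) \<bind> (\<lambda>e. erp_steps x y n k (E - {e})))"

text \<open>The budget card (complete_edges n) suffices, since each step removes an edge.\<close>
definition edge_removal_process :: "nat \<Rightarrow> nat \<Rightarrow> nat \<Rightarrow> (nat \<times> nat) set pmf" where
  "edge_removal_process x y n =
     erp_steps x y n (card (complete_edges n)) (complete_edges n)"

end

theory Submission
  imports Defs
begin

text \<open>Let z = min x y and m = n + 1 - z. The path 1 \<rightarrow> 2 \<rightarrow> \<dots> \<rightarrow> m, together with the
  isolated vertices m+1, \<dots>, n, has exactly z initial and z terminal vertices, and deleting
  any of its edges creates a new initial and a new terminal vertex; as z is one of x, y,
  no edge of the path is removable. Every edge of the complete graph outside the path, on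
  the other hand, is removable as long as the path survives, since removing edges can only
  create initial and terminal vertices and the path already has at most x and at most y of
  them. So the process can delete exactly the edges outside the path and then stops at a
  (z, z) graph, which is not an (x, y) graph because x \<noteq> y.\<close>

lemma initial_vs_antimono: "A \<subseteq> B \<Longrightarrow> initial_vs n B \<subseteq> initial_vs n A"
  unfolding initial_vs_def by auto

lemma terminal_vs_antimono: "A \<subseteq> B \<Longrightarrow> terminal_vs n B \<subseteq> terminal_vs n A"
  unfolding terminal_vs_def by auto

lemma finite_initial_vs [simp]: "finite (initial_vs n E)"
  unfolding initial_vs_def by simp

lemma finite_terminal_vs [simp]: "finite (terminal_vs n E)"
  unfolding terminal_vs_def by simp

lemma finite_complete_edges: "finite (complete_edges n)"
proof (rule finite_subset)
  show "complete_edges n \<subseteq> {1..n} \<times> {1..n}"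
    unfolding complete_edges_def by auto
qed simp

lemma finite_removable_edges: "finite E \<Longrightarrow> finite (removable_edges x y n E)"
  unfolding removable_edges_def by simp

lemma erp_steps_stuck:
  "removable_edges x y n E = {} \<Longrightarrow> erp_steps x y n k E = return_pmf E"
  by (cases k) auto

lemma removable_edges_above:
  assumes "card (initial_vs n G) \<le> x" and "card (terminal_vs n G) \<le> y"
    and "G \<subseteq> E" and "e \<in> E - G"
  shows "e \<in> removable_edges x y n E"
proof -
  have "G \<subseteq> E - {e}" using assms(3,4) by auto
  then have "card (initial_vs n (E - {e})) \<le> x" "card (terminal_vs n (E - {e})) \<le> y"
    using assms(1,2) card_mono[OF finite_initial_vs initial_vs_antimono]
      card_mono[OF finite_terminal_vs terminal_vs_antimono] by (meson le_trans)+
  then show ?thesis using assms(4) unfolding removable_edges_def by auto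
qed

lemma stuck_subgraph_in_set_erp_steps:
  assumes stuck: "removable_edges x y n G = {}"
    and initial_le: "card (initial_vs n G) \<le> x" and terminal_le: "card (terminal_vs n G) \<le> y"
  shows "G \<subseteq> E \<Longrightarrow> finite E \<Longrightarrow> card (E - G) \<le> k \<Longrightarrow> G \<in> set_pmf (erp_steps x y n k E)"
proof (induction k arbitrary: E)
  case 0
  then have "E = G" by auto
  then show ?case by simp
next
  case (Suc k)
  show ?case
  proof (cases "E = G")
    case True
    then show ?thesis using erp_steps_stuck[OF stuck, of "Suc k"] by simp
  next
    case False
    then obtain e where e: "e \<in> E - G" using Suc.prems(1) by auto
    have e_removable: "e \<in> removable_edges x y n E"
      using removable_edges_above[OF initial_le terminal_le Suc.prems(1) e] .
    have "E - G = insert e ((E - {e}) - G)" using e by auto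
    then have "card ((E - {e}) - G) \<le> k" using Suc.prems(2,3) by simp
    then have "G \<in> set_pmf (erp_steps x y n k (E - {e}))"
      using Suc.IH[of "E - {e}"] Suc.prems(1,2) e by auto
    then show ?thesis
      using e_removable finite_removable_edges[OF Suc.prems(2)] by auto
  qed
qed

lemma stuck_subgraph_in_set_edge_removal_process:
  assumes "removable_edges x y n G = {}" and "G \<subseteq> complete_edges n"
    and "card (initial_vs n G) \<le> x" and "card (terminal_vs n G) \<le> y"
  shows "G \<in> set_pmf (edge_removal_process x y n)"
  unfolding edge_removal_process_def
  using assms finite_complete_edges
  by (intro stuck_subgraph_in_set_erp_steps) (auto intro: card_mono)

definition path_edges :: "nat \<Rightarrow> (nat \<times> nat) set" where
  "path_edges m = {(a, a + 1) | a. 1 \<le> a \<and> a < m}"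

lemma path_edges_subset_complete_edges: "m \<le> n \<Longrightarrow> path_edges m \<subseteq> complete_edges n"
  unfolding path_edges_def complete_edges_def by auto

lemma initial_vs_path_edges:
  "1 \<le> m \<Longrightarrow> initial_vs n (path_edges m) = insert 1 {m<..n} \<inter> {1..n}"
  unfolding initial_vs_def path_edges_def by (auto, presburger)

lemma terminal_vs_path_edges:
  "terminal_vs n (path_edges m) = {m..n} \<inter> {1..n}"
  unfolding terminal_vs_def path_edges_def by auto

lemma card_initial_vs_path_edges:
  "1 \<le> m \<Longrightarrow> m \<le> n \<Longrightarrow> card (initial_vs n (path_edges m)) = n + 1 - m"
  by (simp add: initial_vs_path_edges Int_absorb2 insert_absorb2 subset_iff)

lemma card_terminal_vs_path_edges:
  "1 \<le> m \<Longrightarrow> card (terminal_vs n (path_edges m)) = n + 1 - m"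
  by (simp add: terminal_vs_path_edges Int_absorb2 subset_iff)

text \<open>Deleting the edge (a, a + 1) of the path makes a + 1 initial and a terminal.\<close>

lemma initial_vs_path_edges_remove:
  assumes "m \<le> n" and "e \<in> path_edges m"
  shows "initial_vs n (path_edges m) \<subset> initial_vs n (path_edges m - {e})"
proof -
  obtain a where a: "e = (a, a + 1)" "1 \<le> a" "a < m"
    using assms(2) unfolding path_edges_def by auto
  have "a + 1 \<in> initial_vs n (path_edges m - {e}) - initial_vs n (path_edges m)"
    using a assms(1) unfolding initial_vs_def path_edges_def by auto
  then show ?thesis using initial_vs_antimono[of "path_edges m - {e}"] by blast
qed

lemma terminal_vs_path_edges_remove:
  assumes "m \<le> n" and "e \<in> path_edges m"
  shows "terminal_vs n (path_edges m) \<subset> terminal_vs n (path_edges m - {e})"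
proof -
  obtain a where a: "e = (a, a + 1)" "1 \<le> a" "a < m"
    using assms(2) unfolding path_edges_def by auto
  have "a \<in> terminal_vs n (path_edges m - {e}) - terminal_vs n (path_edges m)"
    using a assms(1) unfolding terminal_vs_def path_edges_def by auto
  then show ?thesis using terminal_vs_antimono[of "path_edges m - {e}"] by blast
qed

lemma removable_edges_path_edges:
  assumes "1 \<le> m" and "m \<le> n" and "n + 1 - m = min x y"
  shows "removable_edges x y n (path_edges m) = {}"
proof (rule ccontr)
  assume "removable_edges x y n (path_edges m) \<noteq> {}"
  then obtain e where e: "e \<in> path_edges m"
    and "card (initial_vs n (path_edges m - {e})) \<le> x"
    and "card (terminal_vs n (path_edges m - {e})) \<le> y"
    unfolding removable_edges_def by auto
  moreover have "min x y < card (initial_vs n (path_edges m - {e}))"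
    using psubset_card_mono[OF finite_initial_vs initial_vs_path_edges_remove[OF assms(2) e]]
      card_initial_vs_path_edges[OF assms(1,2)] assms(3) by simp
  moreover have "min x y < card (terminal_vs n (path_edges m - {e}))"
    using psubset_card_mono[OF finite_terminal_vs terminal_vs_path_edges_remove[OF assms(2) e]]
      card_terminal_vs_path_edges[OF assms(1)] assms(3) by simp
  ultimately show False by linarith
qed

theorem mainTheorem5:
  fixes x y n :: nat
  assumes "x \<ge> 1" and "y \<ge> 1" and "x \<noteq> y" and "n \<ge> max x y"
  shows "measure_pmf.prob (edge_removal_process x y n) {E. \<not> is_xy_tdg x y n E} > 0"
proof -
  define m where "m = n + 1 - min x y"
  have m: "1 \<le> m" "m \<le> n" "n + 1 - m = min x y"
    using assms(1,2,4) unfolding m_def by auto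
  have card_init: "card (initial_vs n (path_edges m)) = min x y"
    and card_term: "card (terminal_vs n (path_edges m)) = min x y"
    using m by (simp_all add: card_initial_vs_path_edges card_terminal_vs_path_edges)
  have "path_edges m \<in> set_pmf (edge_removal_process x y n)"
    using card_init card_term
    by (intro stuck_subgraph_in_set_edge_removal_process removable_edges_path_edges
        path_edges_subset_complete_edges m) simp_all
  moreover have "\<not> is_xy_tdg x y n (path_edges m)"
    unfolding is_xy_tdg_def using card_init card_term assms(3) by auto
  ultimately show ?thesis by (intro measure_pmf_posI) auto
qed

end
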